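(* Let $X$ be a real Banach space and $T:X\rightrightarrows X^*$ maximal monotone. The following are equivalent: 1. $D(T)$ is bounded; 2. for every $h\in\mathcal{F}_T$, $P_1(D(h))$ is bounded; 3. there exists $h\in\mathcal{F}_T$ with $P_1(D(h))$ bounded; 4. the functions $h(x,\cdot):X^*\to\mathbb{R}\cup\{\pm\infty\}$, for $h\in\mathcal{F}_T$ lower semicontinuous in the strong$\times$weak-$*$ topology and $x\in P_1D(h)$, are all real-valued and there is $0\leq L<\infty$ with $|h(x,x^* )-h(x,z^* )|\leq L\|x^*-z^*\|$ for all such $h$ and $x$ and all $x^*,z^*\in X^*$; 5. there exists $h\in\mathcal{F}_T$, lower semicontinuous in the strong$\times$weak-$*$ topology, such that the functions $h(x,\cdot)$, $x\in P_1D(h)$, are all real-valued and there is $0\leq L<\infty$ with $|h(x,x^* )-h(x,z^* )|\leq L\|x^*-z^*\|$ for all $x\in P_1D(h)$, $x^*,z^*\in X^*$.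
   Context: An operator $T:X\rightrightarrows X^*$ is a subset of $X\times X^*$, with domain $D(T)$ its projection onto $X$; $T$ is monotone if $\langle x-y,x^*-y^*\rangle\geq0$ for all $(x,x^* ),(y,y^* )\in T$, and maximal monotone if it is monotone and not properly contained in another monotone operator. $\mathcal{F}_T$ is the set of all convex lower semicontinuous (in the norm topology) $h:X\times X^*\to\mathbb{R}\cup\{\pm\infty\}$ with $h(x,x^* )\geq\langle x,x^*\rangle$ for all $(x,x^* )$ and equality on $T$. "Strong$\times$weak-$*$" is the product of the norm topology on $X$ and the weak-$*$ topology on $X^*$. $P_1,P_2$ are the canonical projections of $X\times X^*$ onto $X$ and $X^*$; $D(h)=\{z\;|\;h(z)<\infty\}$. *)

theory Defs
  imports "HOL-Analysis.Analysis"
begin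

text \<open>The dual space X* is modelled as the Banach space of bounded linear
functionals 'a \<Rightarrow>L real; the duality pairing is blinfun_apply.\<close>

definition pairing :: "'a::real_normed_vector \<Rightarrow> ('a \<Rightarrow>\<^sub>L real) \<Rightarrow> real" where
  "pairing x xs = blinfun_apply xs x"

definition monotone_op :: "('a::real_normed_vector \<times> ('a \<Rightarrow>\<^sub>L real)) set \<Rightarrow> bool" where
  "monotone_op T \<longleftrightarrow>
     (\<forall>(x, xs)\<in>T. \<forall>(y, ys)\<in>T. pairing (x - y) (xs - ys) \<ge> 0)"

definition maximal_monotone :: "('a::real_normed_vector \<times> ('a \<Rightarrow>\<^sub>L real)) set \<Rightarrow> bool" where
  "maximal_monotone T \<longleftrightarrow> monotone_op T \<and>
     (\<forall>S. monotone_op S \<and> T \<subseteq> S \<longrightarrow> S = T)"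

definition weak_star_topology :: "('a::real_normed_vector \<Rightarrow>\<^sub>L real) topology" where
  "weak_star_topology =
     topology_generated_by {{f. blinfun_apply f x \<in> U} | x U. open U}"

definition strong_weak_star :: "('a::real_normed_vector \<times> ('a \<Rightarrow>\<^sub>L real)) topology" where
  "strong_weak_star = prod_topology euclidean weak_star_topology"

definition lsc_wrt :: "'b topology \<Rightarrow> ('b \<Rightarrow> ereal) \<Rightarrow> bool" where
  "lsc_wrt Top h \<longleftrightarrow> (\<forall>c::ereal. openin Top {z \<in> topspace Top. c < h z})"

definition ereal_convex :: "('b::real_vector \<Rightarrow> ereal) \<Rightarrow> bool" where
  "ereal_convex h \<longleftrightarrow> convex {(z, t::real). h z \<le> ereal t}"

definition dom_op :: "('a \<times> 'b) set \<Rightarrow> 'a set" where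
  "dom_op T = fst ` T"

definition dom_fun :: "('b \<Rightarrow> ereal) \<Rightarrow> 'b set" where
  "dom_fun h = {z. h z < \<infinity>}"

definition fitz_family ::
  "('a::real_normed_vector \<times> ('a \<Rightarrow>\<^sub>L real)) set \<Rightarrow> ('a \<times> ('a \<Rightarrow>\<^sub>L real) \<Rightarrow> ereal) set" where
  "fitz_family T = {h. ereal_convex h \<and> lsc_wrt euclidean h \<and>
       (\<forall>x xs. h (x, xs) \<ge> ereal (pairing x xs)) \<and>
       (\<forall>(x, xs)\<in>T. h (x, xs) = ereal (pairing x xs))}"

end

theory Submission
  imports Defs
begin

text \<open>The Fitzpatrick function \<open>\<phi>\<^sub>T\<close> is the least member of \<open>F\<^sub>T\<close> and is lower semicontinuous in the
  strong\<times>weak-* topology. If \<open>D(T)\<close> lies in the ball of radius \<open>R\<close>, maximality of \<open>T\<close> confines every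
  \<open>x \<in> P\<^sub>1 D(h)\<close> to the same ball: otherwise a point \<open>(x, zs + \<sigma> g)\<close>, with \<open>g\<close> a norming functional of \<open>x\<close>
  and \<open>\<sigma>\<close> large, would be monotonically related to \<open>T\<close>. The same device, applied to the vector \<open>w\<close> of a
  non-vertical functional separating a point below the graph of \<open>h (x, \<cdot>)\<close> from the epigraph of \<open>h\<close>
  (Hahn--Banach in the strong\<times>weak-* topology, whose dual is \<open>X* \<times> X\<close>), shows \<open>\<parallel>w\<parallel> \<le> R\<close> and hence
  that the slices \<open>h (x, \<cdot>)\<close> are \<open>R\<close>-Lipschitz. Conversely, an \<open>L\<close>-Lipschitz slice at \<open>y \<in> D(T)\<close> bounds
  \<open>\<parallel>y\<parallel>\<close> by \<open>L\<close>, since \<open>h (y, ys + g) \<ge> h (y, ys) + \<parallel>y\<parallel>\<close> for a norming functional \<open>g\<close> of \<open>y\<close>.\<close>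

section \<open>Sublinear functionals and the Hahn--Banach theorem\<close>

definition sublinear :: "('v::real_vector \<Rightarrow> real) \<Rightarrow> bool" where
  "sublinear q \<longleftrightarrow> (\<forall>x y. q (x + y) \<le> q x + q y) \<and> (\<forall>c x. 0 \<le> c \<longrightarrow> q (c *\<^sub>R x) = c * q x)"

lemma sublinear_triangle: "sublinear q \<Longrightarrow> q (x + y) \<le> q x + q y"
  unfolding sublinear_def by blast

lemma sublinear_scaleR: "sublinear q \<Longrightarrow> 0 \<le> c \<Longrightarrow> q (c *\<^sub>R x) = c * q x"
  unfolding sublinear_def by blast

lemma sublinear_zero: "sublinear q \<Longrightarrow> q 0 = 0"
  using sublinear_scaleR[of q 0 0] by simp

lemma sublinear_minus_le: "sublinear q \<Longrightarrow> - q (- x) \<le> q x"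
  using sublinear_triangle[of q x "-x"] sublinear_zero[of q] by simp

lemma sublinearI:
  assumes "\<And>x y. q (x + y) \<le> q x + q y" and "\<And>c x. 0 < c \<Longrightarrow> q (c *\<^sub>R x) = c * q x"
    and "q 0 = 0"
  shows "sublinear q"
  unfolding sublinear_def using assms by (metis less_eq_real_def scale_zero_left mult_zero_left)

lemma sublinear_norm: "sublinear norm"
  by (rule sublinearI) (auto simp: norm_triangle_ineq)

lemma sublinear_add:
  assumes "sublinear f" "sublinear g"
  shows "sublinear (\<lambda>x. f x + g x)"
  using sublinear_triangle[OF assms(1)] sublinear_triangle[OF assms(2)]
    sublinear_scaleR[OF assms(1)] sublinear_scaleR[OF assms(2)]
  unfolding sublinear_def by (smt (verit) distrib_left)

lemma sublinear_cmult:
  assumes "0 \<le> c" "sublinear f"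
  shows "sublinear (\<lambda>x. c * f x)"
  using sublinear_triangle[OF assms(2)] sublinear_scaleR[OF assms(2)] assms(1)
  unfolding sublinear_def by (simp add: distrib_left[symmetric] mult_left_mono mult.left_commute)

lemma sublinear_compose_linear: "linear l \<Longrightarrow> sublinear f \<Longrightarrow> sublinear (\<lambda>x. f (l x))"
  unfolding sublinear_def by (simp add: linear_add linear_scale)

lemma sublinear_sum:
  "(\<And>i. i \<in> I \<Longrightarrow> sublinear (f i)) \<Longrightarrow> sublinear (\<lambda>x. \<Sum>i\<in>I. f i x)"
proof (induction I rule: infinite_finite_induct)
  case (insert i I)
  then show ?case by (simp add: sublinear_add)
qed (auto simp: sublinear_def)

text \<open>The basic step of the Hahn--Banach argument: lowering a sublinear majorant \<open>f\<close> so that it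
  stays sublinear and satisfies \<open>g (-d) \<le> -c\<close> on a convex cone \<open>G\<close> of pairs lying below \<open>f\<close>.\<close>

lemma sublinear_inf_over_cone:
  fixes f :: "'v::real_vector \<Rightarrow> real"
  assumes f: "sublinear f" and G0: "(0, 0) \<in> G"
    and G_add: "\<And>d c d' c'. (d, c) \<in> G \<Longrightarrow> (d', c') \<in> G \<Longrightarrow> (d + d', c + c') \<in> G"
    and G_scale: "\<And>d c r. (d, c) \<in> G \<Longrightarrow> 0 < r \<Longrightarrow> (r *\<^sub>R d, r * c) \<in> G"
    and G_le: "\<And>d c. (d, c) \<in> G \<Longrightarrow> c \<le> f d"
  defines "g \<equiv> \<lambda>w. INF (d, c)\<in>G. f (w + d) - c"
  shows "sublinear g" and "\<And>w. g w \<le> f w" and "\<And>d c. (d, c) \<in> G \<Longrightarrow> g (- d) \<le> - c"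
proof -
  have bdd: "bdd_below ((\<lambda>(d, c). f (w + d) - c) ` G)" for w
  proof (rule bdd_belowI[where m="- f (- w)"])
    fix y assume "y \<in> (\<lambda>(d, c). f (w + d) - c) ` G"
    then obtain d c where dc: "(d, c) \<in> G" "y = f (w + d) - c" by auto
    have "f d \<le> f (w + d) + f (- w)" using sublinear_triangle[OF f, of "w + d" "- w"] by simp
    then show "- f (- w) \<le> y" using G_le[OF dc(1)] dc(2) by simp
  qed
  have low: "g w \<le> f (w + d) - c" if "(d, c) \<in> G" for w d c
    unfolding g_def by (rule cInf_lower[OF _ bdd]) (use that in force)
  have great: "L \<le> g w" if "\<And>d c. (d, c) \<in> G \<Longrightarrow> L \<le> f (w + d) - c" for w L
    unfolding g_def by (rule cInf_greatest) (use G0 that in auto)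
  show le: "g w \<le> f w" for w using low[OF G0, of w] by simp
  show "g (- d) \<le> - c" if "(d, c) \<in> G" for d c using low[OF that, of "- d"] sublinear_zero[OF f] by simp
  show "sublinear g"
  proof (rule sublinearI)
    fix w1 w2
    have "g (w1 + w2) - g w2 \<le> g w1"
    proof (rule great)
      fix d1 c1 assume d1: "(d1, c1) \<in> G"
      have "g (w1 + w2) - (f (w1 + d1) - c1) \<le> g w2"
      proof (rule great)
        fix d2 c2 assume d2: "(d2, c2) \<in> G"
        have "g (w1 + w2) \<le> f (w1 + w2 + (d1 + d2)) - (c1 + c2)" using low[OF G_add[OF d1 d2]] .
        also have "f (w1 + w2 + (d1 + d2)) \<le> f (w1 + d1) + f (w2 + d2)"
          using sublinear_triangle[OF f, of "w1 + d1" "w2 + d2"] by (simp add: algebra_simps)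
        finally show "g (w1 + w2) - (f (w1 + d1) - c1) \<le> f (w2 + d2) - c2" by simp
      qed
      then show "g (w1 + w2) - g w2 \<le> f (w1 + d1) - c1" by simp
    qed
    then show "g (w1 + w2) \<le> g w1 + g w2" by simp
  next
    fix r :: real and w assume r: "0 < r"
    have "g (r *\<^sub>R w) / r \<le> g w"
    proof (rule great)
      fix d c assume dc: "(d, c) \<in> G"
      have "g (r *\<^sub>R w) \<le> f (r *\<^sub>R w + r *\<^sub>R d) - r * c" using low[OF G_scale[OF dc r]] .
      also have "\<dots> = r * (f (w + d) - c)"
        using sublinear_scaleR[OF f, of r "w + d"] r by (simp add: algebra_simps scaleR_add_right)
      finally show "g (r *\<^sub>R w) / r \<le> f (w + d) - c" using r by (simp add: divide_le_eq mult.commute)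
    qed
    moreover have "r * g w \<le> g (r *\<^sub>R w)"
    proof (rule great)
      fix d c assume dc: "(d, c) \<in> G"
      have "g w \<le> f (w + (1 / r) *\<^sub>R d) - (1 / r) * c" using low[OF G_scale[OF dc, of "1 / r"]] r by simp
      also have "f (w + (1 / r) *\<^sub>R d) = (1 / r) * f (r *\<^sub>R w + d)"
        using sublinear_scaleR[OF f, of "1 / r" "r *\<^sub>R w + d"] r by (simp add: scaleR_add_right)
      finally show "r * g w \<le> f (r *\<^sub>R w + d) - c" using r by (simp add: field_simps)
    qed
    ultimately show "g (r *\<^sub>R w) = r * g w" using r by (simp add: divide_le_eq mult.commute)
  next
    have "g 0 \<le> 0" using le[of 0] sublinear_zero[OF f] by simp
    moreover have "0 \<le> g 0" by (rule great) (use G_le in simp)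
    ultimately show "g 0 = 0" by simp
  qed
qed

lemma sublinear_Inf_chain:
  fixes C :: "('v::real_vector \<Rightarrow> real) set"
  assumes "C \<noteq> {}" and sub: "\<And>f. f \<in> C \<Longrightarrow> sublinear f"
    and bdd: "\<And>x. bdd_below ((\<lambda>f. f x) ` C)"
    and chain: "\<And>f g. f \<in> C \<Longrightarrow> g \<in> C \<Longrightarrow> f \<le> g \<or> g \<le> f"
  shows "sublinear (\<lambda>x. INF f\<in>C. f x)"
proof -
  define u where "u = (\<lambda>x. INF f\<in>C. f x)"
  have low: "u x \<le> f x" if "f \<in> C" for f x
    unfolding u_def by (rule cInf_lower[OF _ bdd]) (use that in auto)
  have great: "L \<le> u x" if "\<And>f. f \<in> C \<Longrightarrow> L \<le> f x" for x L
    unfolding u_def by (rule cInf_greatest) (use assms(1) that in auto)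
  have "sublinear u"
  proof (rule sublinearI)
    fix a b
    have "u (a + b) - u b \<le> u a"
    proof (rule great)
      fix f1 assume f1: "f1 \<in> C"
      have "u (a + b) - f1 a \<le> u b"
      proof (rule great)
        fix f2 assume f2: "f2 \<in> C"
        \<comment> \<open>bound \<open>u (a + b)\<close> by the smaller of the two members of the chain\<close>
        consider "f2 \<le> f1" | "f1 \<le> f2" using chain[OF f1 f2] by blast
        then show "u (a + b) - f1 a \<le> f2 b"
        proof cases
          case 1
          have "u (a + b) \<le> f2 a + f2 b" using low[OF f2] sublinear_triangle[OF sub[OF f2]] order_trans by blast
          then show ?thesis using 1 by (simp add: le_fun_def) (smt (verit))
        next
          case 2
          have "u (a + b) \<le> f1 a + f1 b" using low[OF f1] sublinear_triangle[OF sub[OF f1]] order_trans by blast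
          then show ?thesis using 2 by (simp add: le_fun_def) (smt (verit))
        qed
      qed
      then show "u (a + b) - u b \<le> f1 a" by simp
    qed
    then show "u (a + b) \<le> u a + u b" by simp
  next
    fix r :: real and x assume r: "0 < r"
    have "u (r *\<^sub>R x) / r \<le> u x"
    proof (rule great)
      fix f assume f: "f \<in> C"
      have "u (r *\<^sub>R x) \<le> r * f x" using low[OF f, of "r *\<^sub>R x"] sublinear_scaleR[OF sub[OF f], of r x] r by simp
      then show "u (r *\<^sub>R x) / r \<le> f x" using r by (simp add: divide_le_eq mult.commute)
    qed
    moreover have "r * u x \<le> u (r *\<^sub>R x)"
    proof (rule great)
      fix f assume f: "f \<in> C"
      have "r * u x \<le> r * f x" using low[OF f] r by simp
      then show "r * u x \<le> f (r *\<^sub>R x)" using sublinear_scaleR[OF sub[OF f]] r by simp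
    qed
    ultimately show "u (r *\<^sub>R x) = r * u x" using r by (simp add: divide_le_eq mult.commute)
  next
    obtain f0 where f0: "f0 \<in> C" using assms(1) by auto
    have "u 0 \<le> 0" using low[OF f0, of 0] sublinear_zero[OF sub[OF f0]] by simp
    moreover have "0 \<le> u 0" by (rule great) (simp add: sublinear_zero sub)
    ultimately show "u 0 = 0" by simp
  qed
  then show ?thesis unfolding u_def .
qed

lemma exists_minimal_sublinear_below:
  fixes q :: "'v::real_vector \<Rightarrow> real"
  assumes q: "sublinear q"
  shows "\<exists>m. sublinear m \<and> m \<le> q \<and> (\<forall>f. sublinear f \<and> f \<le> m \<longrightarrow> f = m)"
proof -
  define A where "A = {f::'v \<Rightarrow> real. sublinear f \<and> f \<le> q}"
  have po: "partial_order_on A (relation_of (\<ge>) A)"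
    unfolding partial_order_on_def preorder_on_def refl_on_def trans_on_def antisym_on_def relation_of_def
    by auto
  have "\<exists>u\<in>A. \<forall>a\<in>C. u \<le> a" if C: "C \<in> Chains (relation_of (\<ge>) A)" for C
  proof (cases "C = {}")
    case True then show ?thesis using q unfolding A_def by auto
  next
    case False
    have CA: "C \<subseteq> A" using Chains_relation_of[OF C] .
    have chain: "f \<le> g \<or> g \<le> f" if "f \<in> C" "g \<in> C" for f g
      using C that unfolding Chains_def relation_of_def by blast
    have bdd: "bdd_below ((\<lambda>f. f x) ` C)" for x
    proof (rule bdd_belowI[where m="- q (- x)"])
      fix y assume "y \<in> (\<lambda>f. f x) ` C"
      then obtain f where f: "f \<in> C" "y = f x" by auto
      then have "sublinear f" "f (- x) \<le> q (- x)" using CA unfolding A_def by (auto simp: le_fun_def)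
      then show "- q (- x) \<le> y" using sublinear_minus_le[of f x] f by simp
    qed
    define u where "u = (\<lambda>x. INF f\<in>C. f x)"
    have low: "u \<le> f" if "f \<in> C" for f
      unfolding u_def le_fun_def by (intro allI cInf_lower[OF _ bdd]) (use that in auto)
    have "sublinear u"
      unfolding u_def by (rule sublinear_Inf_chain[OF False _ bdd chain]) (use CA A_def in auto)
    moreover obtain f0 where "f0 \<in> C" using False by auto
    then have "u \<le> q" using low CA unfolding A_def by fastforce
    ultimately show ?thesis using low unfolding A_def by blast
  qed
  then obtain m where "m \<in> A" and "\<forall>a\<in>A. a \<le> m \<longrightarrow> a = m"
    using predicate_Zorn[OF po] by blast
  then show ?thesis unfolding A_def using order_trans by blast
qed

text \<open>A minimal sublinear function is odd, hence linear: otherwise lowering it along the ray through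
  a point \<open>y\<close> with \<open>m (- y) > - m y\<close> would produce a smaller sublinear function.\<close>

lemma minimal_sublinear_linear:
  fixes m :: "'v::real_vector \<Rightarrow> real"
  assumes m: "sublinear m" and minimal: "\<And>f. sublinear f \<Longrightarrow> f \<le> m \<Longrightarrow> f = m"
  shows "linear m"
proof -
  have neg: "m (- y) \<le> - m y" for y
  proof -
    define G where "G = (\<lambda>t. (t *\<^sub>R y, t * m y)) ` {0..}"
    define g where "g = (\<lambda>w. INF (d, c)\<in>G. m (w + d) - c)"
    have ray: "(t *\<^sub>R y, t * m y) \<in> G" if "t \<ge> 0" for t
      unfolding G_def by (rule rev_image_eqI[of t]) (use that in auto)
    have G_cases: "(\<And>t. t \<ge> 0 \<Longrightarrow> d = t *\<^sub>R y \<Longrightarrow> c = t * m y \<Longrightarrow> P) \<Longrightarrow> P"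
      if "(d, c) \<in> G" for d c P
      using that unfolding G_def by auto
    have G0: "(0, 0) \<in> G" using ray[of 0] by simp
    have G_add: "(d1 + d2, c1 + c2) \<in> G" if in1: "(d1, c1) \<in> G" and in2: "(d2, c2) \<in> G"
      for d1 c1 d2 c2
    proof -
      obtain t1 where "t1 \<ge> 0" "d1 = t1 *\<^sub>R y" "c1 = t1 * m y" by (rule G_cases[OF in1])
      moreover obtain t2 where "t2 \<ge> 0" "d2 = t2 *\<^sub>R y" "c2 = t2 * m y" by (rule G_cases[OF in2])
      ultimately show ?thesis using ray[of "t1 + t2"] by (simp add: scaleR_add_left distrib_right)
    qed
    have G_scale: "(r *\<^sub>R d, r * c) \<in> G" if "(d, c) \<in> G" "r > 0" for d c r
      using that(1) by (elim G_cases) (use ray[of "r * _"] that(2) in \<open>simp add: mult.assoc\<close>)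
    have G_le: "c \<le> m d" if "(d, c) \<in> G" for d c
      using that by (elim G_cases) (simp add: sublinear_scaleR[OF m])
    have g: "sublinear g" "\<And>w. g w \<le> m w" "\<And>d c. (d, c) \<in> G \<Longrightarrow> g (- d) \<le> - c"
      unfolding g_def using sublinear_inf_over_cone[OF m G0 G_add G_scale G_le] by blast+
    have "g = m" using minimal[OF g(1)] g(2) by (simp add: le_fun_def)
    moreover have "g (- y) \<le> - m y" using g(3)[OF ray[of 1]] by simp
    ultimately show ?thesis by simp
  qed
  have odd: "m (- y) = - m y" for y
    using neg[of y] sublinear_minus_le[OF m, of y] by simp
  show "linear m"
  proof (rule linearI)
    fix a b
    have "- m (a + b) \<le> - m a - m b"
      using sublinear_triangle[OF m, of "- a" "- b"] odd[of "a + b"] odd[of a] odd[of b] by simp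
    then show "m (a + b) = m a + m b" using sublinear_triangle[OF m, of a b] by linarith
  next
    fix r x
    show "m (r *\<^sub>R x) = r *\<^sub>R m x"
    proof (cases "r \<ge> 0")
      case True then show ?thesis using sublinear_scaleR[OF m] by simp
    next
      case False
      have "m (r *\<^sub>R x) = m (- ((- r) *\<^sub>R x))" by simp
      also have "\<dots> = r * m x" using odd sublinear_scaleR[OF m, of "- r" x] False by simp
      finally show ?thesis by simp
    qed
  qed
qed

lemma sublinear_dominates_linear:
  fixes q :: "'v::real_vector \<Rightarrow> real"
  assumes "sublinear q"
  shows "\<exists>l. linear l \<and> (\<forall>x. l x \<le> q x)"
proof -
  obtain m where "sublinear m" "m \<le> q" "\<And>f. sublinear f \<Longrightarrow> f \<le> m \<Longrightarrow> f = m"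
    using exists_minimal_sublinear_below[OF assms] by blast
  then show ?thesis using minimal_sublinear_linear by (auto simp: le_fun_def)
qed

lemma sublinear_separation:
  fixes q :: "'v::real_vector \<Rightarrow> real"
  assumes q: "sublinear q" and E: "convex E" "E \<noteq> {}" and far: "\<And>e. e \<in> E \<Longrightarrow> 1 \<le> q (p - e)"
  shows "\<exists>l. linear l \<and> (\<forall>x. l x \<le> q x) \<and> (\<forall>e\<in>E. 1 \<le> l (p - e))"
proof -
  define G where "G = (\<lambda>(s, e). (s *\<^sub>R (p - e), s)) ` ({0..} \<times> E)"
  define g where "g = (\<lambda>w. INF (d, c)\<in>G. q (w + d) - c)"
  have ray: "(s *\<^sub>R (p - e), s) \<in> G" if "s \<ge> 0" "e \<in> E" for s e
    unfolding G_def by (rule rev_image_eqI[of "(s, e)"]) (use that in auto)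
  have G_cases: "(\<And>s e. s \<ge> 0 \<Longrightarrow> e \<in> E \<Longrightarrow> d = s *\<^sub>R (p - e) \<Longrightarrow> c = s \<Longrightarrow> P) \<Longrightarrow> P"
    if "(d, c) \<in> G" for d c P
    using that unfolding G_def by auto
  obtain e0 where e0: "e0 \<in> E" using E by auto
  have G0: "(0, 0) \<in> G" using ray[OF _ e0, of 0] by simp
  have G_add: "(d1 + d2, c1 + c2) \<in> G" if in1: "(d1, c1) \<in> G" and in2: "(d2, c2) \<in> G"
    for d1 c1 d2 c2
  proof -
    obtain s1 e1 where s1: "s1 \<ge> 0" "e1 \<in> E" "d1 = s1 *\<^sub>R (p - e1)" "c1 = s1"
      by (rule G_cases[OF in1])
    obtain s2 e2 where s2: "s2 \<ge> 0" "e2 \<in> E" "d2 = s2 *\<^sub>R (p - e2)" "c2 = s2"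
      by (rule G_cases[OF in2])
    show ?thesis
    proof (cases "s1 + s2 = 0")
      case True then have "s1 = 0" "s2 = 0" using s1 s2 by auto
      then show ?thesis using G0 s1(3,4) s2(3,4) by simp
    next
      case False
      then have pos: "s1 + s2 > 0" using s1 s2 by auto
      \<comment> \<open>the sum of two points of the cone is generated by a convex combination of \<open>e1\<close> and \<open>e2\<close>\<close>
      define e where "e = (s1 / (s1 + s2)) *\<^sub>R e1 + (s2 / (s1 + s2)) *\<^sub>R e2"
      have e: "e \<in> E" unfolding e_def
        by (rule convexD[OF E(1) s1(2) s2(2)]) (use s1(1) s2(1) pos in \<open>auto simp: add_divide_distrib[symmetric]\<close>)
      have "(s1 + s2) *\<^sub>R e
          = ((s1 + s2) * (s1 / (s1 + s2))) *\<^sub>R e1 + ((s1 + s2) * (s2 / (s1 + s2))) *\<^sub>R e2"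
        unfolding e_def by (simp add: scaleR_add_right)
      also have "\<dots> = s1 *\<^sub>R e1 + s2 *\<^sub>R e2" using pos by simp
      finally have "(s1 + s2) *\<^sub>R (p - e) = d1 + d2" unfolding s1(3) s2(3) by (simp add: algebra_simps)
      then show ?thesis using ray[OF _ e, of "s1 + s2"] s1(1,4) s2(1,4) by simp
    qed
  qed
  have G_scale: "(r *\<^sub>R d, r * c) \<in> G" if "(d, c) \<in> G" "r > 0" for d c r
    using that(1) by (elim G_cases) (use ray[of "r * _"] that(2) in simp)
  have G_le: "c \<le> q d" if dc: "(d, c) \<in> G" for d c
  proof -
    obtain s e where s: "s \<ge> 0" "e \<in> E" "d = s *\<^sub>R (p - e)" "c = s" by (rule G_cases[OF dc])
    then have "s * 1 \<le> s * q (p - e)" using far[OF s(2)] by (intro mult_left_mono) auto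
    then show ?thesis using s sublinear_scaleR[OF q] by simp
  qed
  have g: "sublinear g" "\<And>w. g w \<le> q w" "\<And>d c. (d, c) \<in> G \<Longrightarrow> g (- d) \<le> - c"
    unfolding g_def using sublinear_inf_over_cone[OF q G0 G_add G_scale G_le] by blast+
  obtain l where l: "linear l" "\<And>x. l x \<le> g x" using sublinear_dominates_linear[OF g(1)] by blast
  have "1 \<le> l (p - e)" if e: "e \<in> E" for e
  proof -
    have "l (- (p - e)) \<le> - 1" using g(3)[OF ray[OF _ e, of 1]] l(2)[of "- (p - e)"] by simp
    then show ?thesis using linear_neg[OF l(1), of "p - e"] by linarith
  qed
  then show ?thesis using l g(2) by (meson order_trans)
qed

lemma exists_norming_functional:
  fixes x :: "'a::real_normed_vector"
  shows "\<exists>w::'a \<Rightarrow>\<^sub>L real. norm w \<le> 1 \<and> blinfun_apply w x = norm x"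
proof (cases "x = 0")
  case True then show ?thesis by (intro exI[of _ 0]) simp
next
  case False
  obtain l where l: "linear l" "\<And>y. l y \<le> norm y" "1 \<le> l (x /\<^sub>R norm x - 0)"
    using sublinear_separation[OF sublinear_norm, of "{0}" "x /\<^sub>R norm x"] False by auto
  have abs_le: "\<bar>l y\<bar> \<le> norm y" for y
    using l(2)[of y] l(2)[of "- y"] linear_neg[OF l(1), of y] by auto
  have bl: "bounded_linear l"
    by (rule bounded_linear_intro[where K=1]) (use l(1) abs_le in \<open>auto simp: linear_add linear_scale\<close>)
  have "l x = norm x * l (x /\<^sub>R norm x)"
    using False linear_scale[OF l(1), of "norm x" "x /\<^sub>R norm x"] by simp
  then have "norm x \<le> l x" using l(3) False by simp
  then have "l x = norm x" using l(2)[of x] by simp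
  moreover have "norm (Blinfun l) \<le> 1"
    by (rule norm_blinfun_bound) (use abs_le bl in \<open>auto simp: bounded_linear_Blinfun_apply\<close>)
  ultimately show ?thesis using bl by (intro exI[of _ "Blinfun l"]) (simp add: bounded_linear_Blinfun_apply)
qed


section \<open>The strong\<times>weak-* topology\<close>

lemma topspace_weak_star [simp]: "topspace weak_star_topology = UNIV"
  unfolding weak_star_topology_def topology_generated_by_topspace by auto

lemma topspace_strong_weak_star [simp]: "topspace strong_weak_star = UNIV"
  unfolding strong_weak_star_def by simp

lemma continuous_map_weak_star_apply:
  "continuous_map weak_star_topology euclideanreal (\<lambda>f. blinfun_apply f x)"
  unfolding continuous_map_def
proof (intro conjI allI impI)
  fix U :: "real set" assume "openin euclideanreal U"
  then show "openin weak_star_topology {f \<in> topspace weak_star_topology. blinfun_apply f x \<in> U}"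
    unfolding topspace_weak_star unfolding weak_star_topology_def by (intro topology_generated_by_Basis) auto
qed auto

lemma continuous_map_strong_weak_star_affine:
  "continuous_map strong_weak_star euclideanreal (\<lambda>z. blinfun_apply (snd z) y + blinfun_apply ys (fst z))"
proof (rule continuous_map_add)
  show "continuous_map strong_weak_star euclideanreal (\<lambda>z. blinfun_apply (snd z) y)"
    using continuous_map_compose[OF continuous_map_snd continuous_map_weak_star_apply]
    unfolding strong_weak_star_def by (simp add: o_def)
  have "continuous_map euclidean euclideanreal (blinfun_apply ys)"
    using linear_continuous_on[OF blinfun.bounded_linear_right] by simp
  then show "continuous_map strong_weak_star euclideanreal (\<lambda>z. blinfun_apply ys (fst z))"
    using continuous_map_compose[OF continuous_map_fst] unfolding strong_weak_star_def by (simp only: o_def)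
qed

lemma lsc_wrt_continuous:
  assumes "continuous_map X euclideanreal f"
  shows "lsc_wrt X (\<lambda>z. ereal (f z))"
  unfolding lsc_wrt_def
proof
  fix c :: ereal
  have "open (ereal -` {c<..})" by (rule open_vimage) (auto intro: continuous_intros)
  then show "openin X {z \<in> topspace X. c < ereal (f z)}"
    using openin_continuous_map_preimage[OF assms, of "ereal -` {c<..}"] by simp
qed

lemma lsc_wrt_SUP:
  assumes "\<And>i. i \<in> I \<Longrightarrow> lsc_wrt X (f i)"
  shows "lsc_wrt X (\<lambda>z. SUP i\<in>I. f i z)"
  unfolding lsc_wrt_def
proof
  fix c :: ereal
  have "{z \<in> topspace X. c < (SUP i\<in>I. f i z)} = (\<Union>i\<in>I. {z \<in> topspace X. c < f i z})"
    by (auto simp: less_SUP_iff)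
  also have "openin X \<dots>" using assms unfolding lsc_wrt_def by blast
  finally show "openin X {z \<in> topspace X. c < (SUP i\<in>I. f i z)}" .
qed

lemma weak_star_open_contains_basic_nbhd:
  assumes "openin weak_star_topology W" and "xs \<in> W"
  shows "\<exists>F \<delta>. finite F \<and> \<delta> > 0 \<and> {ys. \<forall>u\<in>F. \<bar>blinfun_apply ys u - blinfun_apply xs u\<bar> < \<delta>} \<subseteq> W"
proof -
  have "generate_topology_on {{f. blinfun_apply f x \<in> U} | x U. open U} W"
    using assms(1) unfolding weak_star_topology_def openin_topology_generated_by_iff .
  then show ?thesis using assms(2)
  proof (induction arbitrary: xs)
    case Empty then show ?case by simp
  next
    case (Int a b)
    obtain F1 d1 where 1: "finite F1" "d1 > 0" "{ys. \<forall>u\<in>F1. \<bar>blinfun_apply ys u - blinfun_apply xs u\<bar> < d1} \<subseteq> a"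
      using Int.IH(1) Int.prems by blast
    obtain F2 d2 where 2: "finite F2" "d2 > 0" "{ys. \<forall>u\<in>F2. \<bar>blinfun_apply ys u - blinfun_apply xs u\<bar> < d2} \<subseteq> b"
      using Int.IH(2) Int.prems by blast
    have "{ys. \<forall>u\<in>F1 \<union> F2. \<bar>blinfun_apply ys u - blinfun_apply xs u\<bar> < min d1 d2} \<subseteq> a \<inter> b"
      using 1(3) 2(3) by auto
    moreover have "finite (F1 \<union> F2)" "min d1 d2 > 0" using 1 2 by auto
    ultimately show ?case by blast
  next
    case (UN K)
    then obtain k where "k \<in> K" "xs \<in> k" by auto
    with UN.IH[of k xs] show ?case by blast
  next
    case (Basis s)
    then obtain x U where s: "s = {f. blinfun_apply f x \<in> U}" "open U" by auto
    then have "blinfun_apply xs x \<in> U" using Basis by auto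
    then obtain e where e: "e > 0" "ball (blinfun_apply xs x) e \<subseteq> U" using s(2) openE by blast
    then have "{ys. \<forall>u\<in>{x}. \<bar>blinfun_apply ys u - blinfun_apply xs u\<bar> < e} \<subseteq> s"
      unfolding s(1) by (auto simp: dist_real_def abs_minus_commute)
    then show ?case using e(1) by blast
  qed
qed

lemma strong_weak_star_open_contains_basic_nbhd:
  assumes "openin strong_weak_star W" and "(x, xs) \<in> W"
  shows "\<exists>F \<delta>. finite F \<and> \<delta> > 0 \<and> (\<forall>y ys. norm (y - x) < \<delta> \<and>
      (\<forall>u\<in>F. \<bar>blinfun_apply ys u - blinfun_apply xs u\<bar> < \<delta>) \<longrightarrow> (y, ys) \<in> W)"
proof -
  obtain U V where UV: "open U" "openin weak_star_topology V" "x \<in> U" "xs \<in> V" "U \<times> V \<subseteq> W"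
    using assms unfolding strong_weak_star_def openin_prod_topology_alt by force
  obtain d1 where d1: "d1 > 0" "ball x d1 \<subseteq> U" using UV openE by blast
  obtain F d2 where F: "finite F" "d2 > 0" "{ys. \<forall>u\<in>F. \<bar>blinfun_apply ys u - blinfun_apply xs u\<bar> < d2} \<subseteq> V"
    using weak_star_open_contains_basic_nbhd[OF UV(2,4)] by blast
  have "(y, ys) \<in> W" if "norm (y - x) < min d1 d2" "\<forall>u\<in>F. \<bar>blinfun_apply ys u - blinfun_apply xs u\<bar> < min d1 d2"
    for y ys
  proof -
    have "y \<in> U" using that(1) d1 by (auto simp: dist_norm norm_minus_commute)
    moreover have "ys \<in> V" using that(2) F(3) by force
    ultimately show ?thesis using UV(5) by auto
  qed
  then show ?thesis using F d1 by (intro exI[of _ F] exI[of _ "min d1 d2"]) auto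
qed


section \<open>Maximal monotone operators and the Fitzpatrick function\<close>

lemma pairing_diff_diff:
  "pairing (x - y) (xs - ys) = blinfun_apply xs x - blinfun_apply xs y - blinfun_apply ys x + blinfun_apply ys y"
  unfolding pairing_def by (simp add: blinfun.diff_left blinfun.diff_right)

lemma pairing_diff_commute: "pairing (y - x) (ys - xs) = pairing (x - y) (xs - ys)"
  unfolding pairing_diff_diff by simp

lemma maximal_monotone_memI:
  assumes "maximal_monotone T"
    and related: "\<And>y ys. (y, ys) \<in> T \<Longrightarrow> 0 \<le> pairing (x - y) (xs - ys)"
  shows "(x, xs) \<in> T"
proof -
  have mono: "monotone_op T" and maximal: "\<And>S. monotone_op S \<Longrightarrow> T \<subseteq> S \<Longrightarrow> S = T"
    using assms(1) unfolding maximal_monotone_def by auto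
  have related': "0 \<le> pairing (y - x) (ys - xs)" if "(y, ys) \<in> T" for y ys
    using related[OF that] by (simp add: pairing_diff_commute)
  have "monotone_op (insert (x, xs) T)"
    using mono related related' unfolding monotone_op_def by (auto simp: pairing_def[of 0])
  then show ?thesis using maximal by blast
qed

text \<open>Pushing \<open>zs\<close> along a norming functional of \<open>w\<close> makes \<open>(w, zs + \<sigma> g)\<close> monotonically related to \<open>T\<close>
  once \<open>\<sigma>\<close> is large, unless \<open>w\<close> lies within the bound of the domain.\<close>

lemma maximal_monotone_norm_le_bound:
  assumes "maximal_monotone T" and R: "\<And>y ys. (y, ys) \<in> T \<Longrightarrow> norm y \<le> R"
    and K: "\<And>y ys. (y, ys) \<in> T \<Longrightarrow> K \<le> pairing (w - y) (zs - ys)"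
  shows "norm w \<le> R"
proof (rule ccontr)
  assume "\<not> norm w \<le> R"
  then have wR: "norm w - R > 0" by simp
  obtain g :: "'a \<Rightarrow>\<^sub>L real" where g: "norm g \<le> 1" "blinfun_apply g w = norm w"
    using exists_norming_functional by blast
  define \<sigma> where "\<sigma> = (\<bar>K\<bar> + 1) / (norm w - R)"
  have \<sigma>: "\<sigma> > 0" "\<sigma> * (norm w - R) = \<bar>K\<bar> + 1" unfolding \<sigma>_def using wR by auto
  have "(w, zs + \<sigma> *\<^sub>R g) \<in> T"
  proof (rule maximal_monotone_memI[OF assms(1)])
    fix y ys assume yT: "(y, ys) \<in> T"
    have "blinfun_apply g y \<le> norm g * norm y" using norm_blinfun[of g y] by simp
    also have "\<dots> \<le> R" using mult_mono[OF g(1) R[OF yT]] by simp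
    finally have "\<sigma> * blinfun_apply g y \<le> \<sigma> * R" using \<sigma>(1) by simp
    moreover have "pairing (w - y) (zs + \<sigma> *\<^sub>R g - ys)
        = pairing (w - y) (zs - ys) + \<sigma> * norm w - \<sigma> * blinfun_apply g y"
      unfolding pairing_def using g(2) by (simp add: blinfun.bilinear_simps algebra_simps)
    ultimately show "0 \<le> pairing (w - y) (zs + \<sigma> *\<^sub>R g - ys)"
      using K[OF yT] \<sigma>(2) by (simp add: algebra_simps)
  qed
  then have "norm w \<le> R" by (rule R)
  then show False using wR by simp
qed

definition fitzpatrick ::
  "('a::real_normed_vector \<times> ('a \<Rightarrow>\<^sub>L real)) set \<Rightarrow> 'a \<times> ('a \<Rightarrow>\<^sub>L real) \<Rightarrow> ereal" where
  "fitzpatrick T = (\<lambda>(x, xs). SUP (y, ys)\<in>T. ereal (blinfun_apply xs y + blinfun_apply ys x - blinfun_apply ys y))"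

lemma fitzpatrick_ge:
  "(y, ys) \<in> T \<Longrightarrow> ereal (blinfun_apply xs y + blinfun_apply ys x - blinfun_apply ys y) \<le> fitzpatrick T (x, xs)"
  unfolding fitzpatrick_def by (auto intro: SUP_upper2)

lemma fitzpatrick_ge_pairing:
  assumes "maximal_monotone T"
  shows "ereal (pairing x xs) \<le> fitzpatrick T (x, xs)"
proof (rule ccontr)
  assume "\<not> ereal (pairing x xs) \<le> fitzpatrick T (x, xs)"
  then have less: "fitzpatrick T (x, xs) < ereal (pairing x xs)" by simp
  have "(x, xs) \<in> T"
  proof (rule maximal_monotone_memI[OF assms])
    fix y ys assume "(y, ys) \<in> T"
    from le_less_trans[OF fitzpatrick_ge[OF this] less] show "0 \<le> pairing (x - y) (xs - ys)"
      unfolding pairing_diff_diff by (simp add: pairing_def)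
  qed
  from fitzpatrick_ge[OF this, of xs x] less show False by (simp add: pairing_def)
qed

lemma fitzpatrick_eq_pairing:
  assumes "maximal_monotone T" and "(x, xs) \<in> T"
  shows "fitzpatrick T (x, xs) = ereal (pairing x xs)"
proof (rule antisym)
  have "monotone_op T" using assms(1) unfolding maximal_monotone_def by auto
  then have "blinfun_apply xs y + blinfun_apply ys x - blinfun_apply ys y \<le> pairing x xs" if "(y, ys) \<in> T" for y ys
    using assms(2) that unfolding monotone_op_def pairing_diff_diff by (force simp: pairing_def)
  then show "fitzpatrick T (x, xs) \<le> ereal (pairing x xs)"
    unfolding fitzpatrick_def by (auto intro: SUP_least)
qed (rule fitzpatrick_ge_pairing[OF assms(1)])

lemma ereal_convex_fitzpatrick: "ereal_convex (fitzpatrick T)"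
  unfolding ereal_convex_def
proof (rule convexI)
  fix z1 z2 :: "('a \<times> ('a \<Rightarrow>\<^sub>L real)) \<times> real" and u v :: real
  assume z1: "z1 \<in> {(z, t). fitzpatrick T z \<le> ereal t}" and z2: "z2 \<in> {(z, t). fitzpatrick T z \<le> ereal t}"
    and uv: "0 \<le> u" "0 \<le> v" "u + v = 1"
  obtain x xs t1 x' xs' t2 where z: "z1 = ((x, xs), t1)" "z2 = ((x', xs'), t2)" by (metis prod.collapse)
  have "fitzpatrick T (u *\<^sub>R x + v *\<^sub>R x', u *\<^sub>R xs + v *\<^sub>R xs') \<le> ereal (u * t1 + v * t2)"
    unfolding fitzpatrick_def
  proof (simp, rule SUP_least, clarify)
    fix y ys assume yT: "(y, ys) \<in> T"
    have "fitzpatrick T (x, xs) \<le> ereal t1" "fitzpatrick T (x', xs') \<le> ereal t2" using z1 z2 z by auto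
    then have a: "blinfun_apply xs y + blinfun_apply ys x - blinfun_apply ys y \<le> t1"
      and b: "blinfun_apply xs' y + blinfun_apply ys x' - blinfun_apply ys y \<le> t2"
      using order_trans[OF fitzpatrick_ge[OF yT]] by fastforce+
    have "blinfun_apply ys y = u * blinfun_apply ys y + v * blinfun_apply ys y"
      using uv(3) by (metis distrib_right mult_1)
    then have "blinfun_apply (u *\<^sub>R xs + v *\<^sub>R xs') y + blinfun_apply ys (u *\<^sub>R x + v *\<^sub>R x') - blinfun_apply ys y
        = u * (blinfun_apply xs y + blinfun_apply ys x - blinfun_apply ys y)
          + v * (blinfun_apply xs' y + blinfun_apply ys x' - blinfun_apply ys y)"
      by (simp add: blinfun.bilinear_simps algebra_simps)
    also have "\<dots> \<le> u * t1 + v * t2" using a b uv by (intro add_mono mult_left_mono) auto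
    finally show "ereal (blinfun_apply (u *\<^sub>R xs + v *\<^sub>R xs') y + blinfun_apply ys (u *\<^sub>R x + v *\<^sub>R x')
        - blinfun_apply ys y) \<le> ereal (u * t1 + v * t2)" by simp
  qed
  then show "u *\<^sub>R z1 + v *\<^sub>R z2 \<in> {(z, t). fitzpatrick T z \<le> ereal t}" using z by simp
qed

lemma lsc_wrt_fitzpatrick:
  assumes "\<And>y ys. continuous_map X euclideanreal (\<lambda>z. blinfun_apply (snd z) y + blinfun_apply ys (fst z))"
  shows "lsc_wrt X (fitzpatrick T)"
proof -
  have "lsc_wrt X (\<lambda>z. SUP (y, ys)\<in>T. ereal (blinfun_apply (snd z) y + blinfun_apply ys (fst z) - blinfun_apply ys y))"
    by (intro lsc_wrt_SUP) (auto intro!: lsc_wrt_continuous continuous_map_diff assms)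
  then show ?thesis unfolding fitzpatrick_def by (simp add: case_prod_beta')
qed

lemma lsc_strong_weak_star_fitzpatrick: "lsc_wrt strong_weak_star (fitzpatrick T)"
  by (rule lsc_wrt_fitzpatrick[OF continuous_map_strong_weak_star_affine])

lemma fitzpatrick_in_fitz_family:
  assumes "maximal_monotone T"
  shows "fitzpatrick T \<in> fitz_family T"
proof -
  have "lsc_wrt euclidean (fitzpatrick T)"
    by (rule lsc_wrt_fitzpatrick) (simp add: continuous_intros)
  then show ?thesis unfolding fitz_family_def
    using ereal_convex_fitzpatrick fitzpatrick_ge_pairing[OF assms] fitzpatrick_eq_pairing[OF assms] by auto
qed

lemma le_if_convex_combinations_le:
  fixes b d r :: real
  assumes "\<And>t. 0 < t \<Longrightarrow> t < 1 \<Longrightarrow> (1 - t) * b + t * d \<le> r"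
  shows "b \<le> r"
proof (rule ccontr)
  assume "\<not> b \<le> r"
  define K where "K = \<bar>b - d\<bar> + 1"
  define t where "t = min (1 / 2) ((b - r) / (2 * K))"
  have K: "K > 0" unfolding K_def by simp
  then have t: "0 < t" "t < 1" unfolding t_def using \<open>\<not> b \<le> r\<close> by auto
  have "t * K \<le> (b - r) / (2 * K) * K" unfolding t_def using K by (intro mult_right_mono) auto
  also have "\<dots> = (b - r) / 2" using K by simp
  finally have "t * K \<le> (b - r) / 2" .
  moreover have "t * (b - d) \<le> t * K" using t unfolding K_def by (intro mult_left_mono) auto
  ultimately show False using assms[OF t] \<open>\<not> b \<le> r\<close> by (simp add: algebra_simps)
qed

text \<open>Along the segment from a point of \<open>T\<close> to \<open>(x, xs)\<close>, convexity of \<open>h\<close> and \<open>h \<ge> pairing\<close> leave a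
  quadratic inequality in the parameter whose first-order term is the claim.\<close>

lemma fitz_family_ge_fitzpatrick:
  assumes h: "h \<in> fitz_family T" and yT: "(y, ys) \<in> T"
  shows "ereal (blinfun_apply xs y + blinfun_apply ys x - blinfun_apply ys y) \<le> h (x, xs)"
proof (cases "h (x, xs) = \<infinity>")
  case False
  have cv: "convex {(z, t). h z \<le> ereal t}" and ge: "\<And>x xs. ereal (pairing x xs) \<le> h (x, xs)"
    and eqT: "h (y, ys) = ereal (pairing y ys)"
    using h yT unfolding fitz_family_def ereal_convex_def by auto
  have "h (x, xs) \<noteq> - \<infinity>" using ge[of x xs] by auto
  then obtain r where r: "h (x, xs) = ereal r" using False by (cases "h (x, xs)") auto
  define a where "a = blinfun_apply ys y"
  define b where "b = blinfun_apply ys x + blinfun_apply xs y"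
  define d where "d = blinfun_apply xs x"
  have "(1 - t) * (b - a) + t * d \<le> r" if t: "0 < t" "t < 1" for t
  proof -
    have m1: "((y, ys), a) \<in> {(z, t). h z \<le> ereal t}" using eqT unfolding a_def pairing_def by simp
    have m2: "((x, xs), r) \<in> {(z, t). h z \<le> ereal t}" using r by simp
    have "(1 - t) *\<^sub>R ((y, ys), a) + t *\<^sub>R ((x, xs), r) \<in> {(z, t). h z \<le> ereal t}"
      using convexD[OF cv m1 m2, of "1 - t" t] t by simp
    then have "h ((1 - t) *\<^sub>R y + t *\<^sub>R x, (1 - t) *\<^sub>R ys + t *\<^sub>R xs) \<le> ereal ((1 - t) * a + t * r)"
      by simp
    then have "pairing ((1 - t) *\<^sub>R y + t *\<^sub>R x) ((1 - t) *\<^sub>R ys + t *\<^sub>R xs) \<le> (1 - t) * a + t * r"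
      using ge order_trans by fastforce
    moreover have "pairing ((1 - t) *\<^sub>R y + t *\<^sub>R x) ((1 - t) *\<^sub>R ys + t *\<^sub>R xs)
        = (1 - t) * (1 - t) * a + (1 - t) * t * b + t * t * d"
      unfolding pairing_def a_def b_def d_def by (simp add: blinfun.bilinear_simps algebra_simps)
    ultimately have "t * ((1 - t) * (b - a) + t * d) \<le> t * r" by (simp add: algebra_simps)
    then show ?thesis using t by simp
  qed
  then have "b - a \<le> r" by (rule le_if_convex_combinations_le)
  then show ?thesis using r unfolding a_def b_def by simp
qed simp


section \<open>Separation in the strong\<times>weak-* topology\<close>

lemma sublinear_abs_linear:
  fixes l :: "'v::real_vector \<Rightarrow> real"
  assumes "linear l"
  shows "sublinear (\<lambda>x. \<bar>l x\<bar>)"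
  using sublinear_compose_linear[OF assms sublinear_norm] by (simp add: real_norm_def)

lemma linear_functional_eq_evaluation:
  fixes l :: "('a::real_normed_vector \<Rightarrow>\<^sub>L real) \<Rightarrow> real"
  assumes "finite F" and "linear l" and "\<And>ys. \<forall>u\<in>F. blinfun_apply ys u = 0 \<Longrightarrow> l ys = 0"
  shows "\<exists>v. \<forall>ys. l ys = blinfun_apply ys v"
  using assms
proof (induction F arbitrary: l rule: finite_induct)
  case empty
  then show ?case by (intro exI[of _ 0]) (simp add: blinfun.zero_right)
next
  case (insert a F)
  show ?case
  proof (cases "\<exists>z::'a \<Rightarrow>\<^sub>L real. (\<forall>u\<in>F. blinfun_apply z u = 0) \<and> blinfun_apply z a = 1")
    case True
    then obtain z :: "'a \<Rightarrow>\<^sub>L real" where z: "\<forall>u\<in>F. blinfun_apply z u = 0" "blinfun_apply z a = 1" by blast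
    define M where "M = (\<lambda>ys::'a \<Rightarrow>\<^sub>L real. ys - blinfun_apply ys a *\<^sub>R z)"
    have "linear M"
      by (rule linearI) (simp_all add: M_def blinfun.bilinear_simps algebra_simps scaleR_add_left)
    then have lin: "linear (l \<circ> M)" by (rule linear_compose[OF _ insert.prems(1)])
    have ker: "(l \<circ> M) ys = 0" if "\<forall>u\<in>F. blinfun_apply ys u = 0" for ys
    proof -
      have "\<forall>u\<in>insert a F. blinfun_apply (M ys) u = 0"
        using that z unfolding M_def by (simp add: blinfun.bilinear_simps)
      then show ?thesis using insert.prems(2) by simp
    qed
    obtain v' where v': "\<forall>ys. (l \<circ> M) ys = blinfun_apply ys v'" using insert.IH[OF lin ker] by blast
    show ?thesis
    proof (intro exI[of _ "v' + l z *\<^sub>R a"] allI)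
      fix ys
      have "ys = M ys + blinfun_apply ys a *\<^sub>R z" unfolding M_def by simp
      then have "l ys = l (M ys) + blinfun_apply ys a * l z"
        using linear_add[OF insert.prems(1)] linear_scale[OF insert.prems(1)] by (metis real_scaleR_def)
      also have "\<dots> = blinfun_apply ys (v' + l z *\<^sub>R a)" using v' by (simp add: blinfun.bilinear_simps)
      finally show "l ys = blinfun_apply ys (v' + l z *\<^sub>R a)" .
    qed
  next
    case False
    \<comment> \<open>then the evaluation at \<open>a\<close> vanishes on the common kernel of the evaluations at \<open>F\<close>\<close>
    have ker: "l ys = 0" if F0: "\<forall>u\<in>F. blinfun_apply ys u = 0" for ys
    proof -
      have "blinfun_apply ys a = 0"
      proof (rule ccontr)
        assume ne: "blinfun_apply ys a \<noteq> 0"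
        have "(\<forall>u\<in>F. blinfun_apply ((1 / blinfun_apply ys a) *\<^sub>R ys) u = 0) \<and>
            blinfun_apply ((1 / blinfun_apply ys a) *\<^sub>R ys) a = 1"
          using F0 ne by (simp add: blinfun.bilinear_simps)
        then show False using False by blast
      qed
      then show ?thesis using F0 insert.prems(2) by simp
    qed
    show ?thesis by (rule insert.IH[OF insert.prems(1) ker])
  qed
qed

lemma linear_functional_strong_weak_star_repr:
  fixes l :: "(('a::real_normed_vector) \<times> ('a \<Rightarrow>\<^sub>L real)) \<times> real \<Rightarrow> real"
  assumes l: "linear l" and F: "finite F"
    and bound: "\<And>y. l ((y, 0), 0) \<le> C * norm y"
    and kernel: "\<And>ys. \<forall>u\<in>F. blinfun_apply ys u = 0 \<Longrightarrow> l ((0, ys), 0) \<le> 0"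
  shows "\<exists>u v A. \<forall>y ys s. l ((y, ys), s) = blinfun_apply u y + blinfun_apply ys v + s * A"
proof -
  define l1 where "l1 = (\<lambda>y. l ((y, 0), 0))"
  define l2 where "l2 = (\<lambda>ys. l ((0, ys), 0))"
  define A where "A = l ((0, 0), 1)"
  have decomp: "l ((y, ys), s) = l1 y + l2 ys + s * A" for y ys s
  proof -
    have "((y, ys), s) = ((y, 0), 0) + ((0, ys), 0) + s *\<^sub>R ((0, 0), 1)" by simp
    then show ?thesis unfolding l1_def l2_def A_def by (simp only: linear_add[OF l] linear_scale[OF l]) simp
  qed
  have "linear l1"
  proof (rule linearI)
    show "l1 (a + b) = l1 a + l1 b" for a b
      unfolding l1_def using linear_add[OF l, of "((a, 0), 0)" "((b, 0), 0)"] by simp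
    show "l1 (r *\<^sub>R a) = r *\<^sub>R l1 a" for r a
      unfolding l1_def using linear_scale[OF l, of r "((a, 0), 0)"] by simp
  qed
  have "linear l2"
  proof (rule linearI)
    show "l2 (a + b) = l2 a + l2 b" for a b
      unfolding l2_def using linear_add[OF l, of "((0, a), 0)" "((0, b), 0)"] by simp
    show "l2 (r *\<^sub>R a) = r *\<^sub>R l2 a" for r a
      unfolding l2_def using linear_scale[OF l, of r "((0, a), 0)"] by simp
  qed
  have "norm (l1 y) \<le> norm y * C" for y
  proof -
    have "l1 y \<le> C * norm y" "l1 (- y) \<le> C * norm y" using bound[of y] bound[of "- y"] unfolding l1_def by simp_all
    then show ?thesis using linear_neg[OF \<open>linear l1\<close>, of y] by (simp add: abs_le_iff mult.commute)
  qed
  then have "bounded_linear l1"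
    by (intro bounded_linear_intro[where K=C]) (use \<open>linear l1\<close> in \<open>auto simp: linear_add linear_scale\<close>)
  moreover obtain v where "\<forall>ys. l2 ys = blinfun_apply ys v"
  proof (rule linear_functional_eq_evaluation[OF F \<open>linear l2\<close>, THEN exE])
    fix ys :: "'a \<Rightarrow>\<^sub>L real" assume "\<forall>u\<in>F. blinfun_apply ys u = 0"
    then have "l2 ys \<le> 0" "l2 (- ys) \<le> 0"
      using kernel[of ys] kernel[of "- ys"] unfolding l2_def by (simp_all add: blinfun.minus_left)
    then show "l2 ys = 0" using linear_neg[OF \<open>linear l2\<close>, of ys] by simp
  qed blast
  ultimately show ?thesis using decomp
    by (intro exI[of _ "Blinfun l1"] exI[of _ v] exI[of _ A]) (simp add: bounded_linear_Blinfun_apply)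
qed

text \<open>A gauge on \<open>(X \<times> X*) \<times> \<real>\<close> dominated by finitely many seminorms of the strong\<times>weak-* topology.\<close>

definition sws_gauge :: "'a set \<Rightarrow> real \<Rightarrow> real \<Rightarrow> (('a::real_normed_vector \<times> ('a \<Rightarrow>\<^sub>L real)) \<times> real) \<Rightarrow> real"
  where "sws_gauge F \<delta> \<gamma> w = (1 / \<delta>) * norm (fst (fst w))
    + ((1 / \<delta>) * (\<Sum>u\<in>F. \<bar>blinfun_apply (snd (fst w)) u\<bar>) + (1 / \<gamma>) * \<bar>snd w\<bar>)"

lemma sublinear_sws_gauge:
  assumes "0 < \<delta>" and "0 < \<gamma>"
  shows "sublinear (sws_gauge F \<delta> \<gamma>)"
proof -
  have lin: "linear (\<lambda>w. fst (fst w))" "linear (\<lambda>w. blinfun_apply (snd (fst w)) u)" "linear snd" for u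
    by (auto intro!: linearI simp: blinfun.bilinear_simps)
  have "sublinear (\<lambda>w. norm (fst (fst w)))"
    by (rule sublinear_compose_linear[OF lin(1) sublinear_norm])
  moreover have "sublinear (\<lambda>w. \<Sum>u\<in>F. \<bar>blinfun_apply (snd (fst w)) u\<bar>)"
    by (rule sublinear_sum, rule sublinear_abs_linear, rule lin(2))
  moreover have "sublinear (\<lambda>w. \<bar>snd w\<bar>)" by (rule sublinear_abs_linear[OF lin(3)])
  ultimately show ?thesis
    unfolding sws_gauge_def[abs_def] using assms by (intro sublinear_add sublinear_cmult) auto
qed

lemma sws_gauge_less_one:
  assumes "finite F" and "0 < \<delta>" and "0 < \<gamma>" and "sws_gauge F \<delta> \<gamma> ((y, ys), s) < 1"
  shows "norm y < \<delta>" and "\<And>u. u \<in> F \<Longrightarrow> \<bar>blinfun_apply ys u\<bar> < \<delta>" and "\<bar>s\<bar> < \<gamma>"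
proof -
  have nonneg: "0 \<le> norm y / \<delta>" "0 \<le> (\<Sum>u\<in>F. \<bar>blinfun_apply ys u\<bar>) / \<delta>" "0 \<le> \<bar>s\<bar> / \<gamma>"
    using assms(2,3) by (simp_all add: sum_nonneg)
  have lt: "norm y / \<delta> + (\<Sum>u\<in>F. \<bar>blinfun_apply ys u\<bar>) / \<delta> + \<bar>s\<bar> / \<gamma> < 1"
    using assms(4) unfolding sws_gauge_def by simp
  then have "norm y / \<delta> < 1" "(\<Sum>u\<in>F. \<bar>blinfun_apply ys u\<bar>) / \<delta> < 1" "\<bar>s\<bar> / \<gamma> < 1"
    using nonneg by linarith+
  then have "norm y < \<delta>" and sum: "(\<Sum>u\<in>F. \<bar>blinfun_apply ys u\<bar>) < \<delta>" and "\<bar>s\<bar> < \<gamma>"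
    using assms(2,3) by (simp_all add: divide_less_eq)
  then show "norm y < \<delta>" and "\<bar>s\<bar> < \<gamma>" by simp_all
  show "\<bar>blinfun_apply ys u\<bar> < \<delta>" if "u \<in> F" for u
    using member_le_sum[OF that _ assms(1), of "\<lambda>u. \<bar>blinfun_apply ys u\<bar>"] sum by simp
qed

text \<open>Separation from the epigraph of a strong\<times>weak-* lower semicontinuous convex function: a unit ball
  of the gauge around \<open>((x0, xs0), t)\<close> misses the epigraph, so Hahn--Banach applies with that gauge.\<close>

lemma strong_weak_star_epigraph_separation:
  fixes h :: "'a::real_normed_vector \<times> ('a \<Rightarrow>\<^sub>L real) \<Rightarrow> ereal"
  assumes lsc: "lsc_wrt strong_weak_star h" and cv: "ereal_convex h"
    and dom: "h (x1, xs1) < \<infinity>" and t: "ereal t < h (x0, xs0)"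
  shows "\<exists>(u::'a \<Rightarrow>\<^sub>L real) (v::'a) (A::real). \<forall>y ys s. h (y, ys) \<le> ereal s \<longrightarrow>
           1 \<le> blinfun_apply u (x0 - y) + blinfun_apply (xs0 - ys) v + A * (t - s)"
proof -
  obtain c where c: "ereal t < ereal c" "ereal c < h (x0, xs0)" using ereal_dense2[OF t] by blast
  have "openin strong_weak_star {z. ereal c < h z}"
    using lsc unfolding lsc_wrt_def by simp
  from strong_weak_star_open_contains_basic_nbhd[OF this, of x0 xs0] c(2)
  obtain F \<delta> where F: "finite F" "\<delta> > 0" and nbhd: "\<forall>y ys. norm (y - x0) < \<delta> \<and>
      (\<forall>u\<in>F. \<bar>blinfun_apply ys u - blinfun_apply xs0 u\<bar> < \<delta>) \<longrightarrow> (y, ys) \<in> {z. ereal c < h z}"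
    by auto
  define \<gamma> where "\<gamma> = c - t"
  have \<gamma>: "\<gamma> > 0" unfolding \<gamma>_def using c(1) by simp
  define q where "q = sws_gauge F \<delta> \<gamma>"
  define E where "E = {(z, s). h z \<le> ereal s}"
  define p where "p = ((x0, xs0), t)"
  have "sublinear q" unfolding q_def by (rule sublinear_sws_gauge[OF F(2) \<gamma>])
  have "convex E" using cv unfolding ereal_convex_def E_def .
  have "h (x1, xs1) \<le> ereal (real_of_ereal (h (x1, xs1)))" using dom by (cases "h (x1, xs1)") auto
  then have "E \<noteq> {}" unfolding E_def by blast
  have far: "1 \<le> q (p - e)" if "e \<in> E" for e
  proof (rule ccontr)
    obtain y ys s where e: "e = ((y, ys), s)" and hs: "h (y, ys) \<le> ereal s"
      using \<open>e \<in> E\<close> unfolding E_def by auto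
    assume "\<not> 1 \<le> q (p - e)"
    then have "sws_gauge F \<delta> \<gamma> ((x0 - y, xs0 - ys), t - s) < 1" unfolding q_def p_def e by simp
    note near = sws_gauge_less_one[OF F \<gamma> this]
    have "norm (y - x0) < \<delta>" using near(1) by (simp add: norm_minus_commute)
    moreover have "\<forall>u\<in>F. \<bar>blinfun_apply ys u - blinfun_apply xs0 u\<bar> < \<delta>"
      using near(2) by (simp add: blinfun.diff_left abs_minus_commute)
    ultimately have "ereal c < h (y, ys)" using nbhd by blast
    then have "ereal c < ereal s" using hs by (rule less_le_trans)
    then show False using near(3) unfolding \<gamma>_def by simp
  qed
  obtain l where l: "linear l" "\<And>w. l w \<le> q w" "\<And>e. e \<in> E \<Longrightarrow> 1 \<le> l (p - e)"
    using sublinear_separation[OF \<open>sublinear q\<close> \<open>convex E\<close> \<open>E \<noteq> {}\<close> far] by blast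
  obtain u v A where repr: "\<And>y ys s. l ((y, ys), s) = blinfun_apply u y + blinfun_apply ys v + s * A"
  proof (rule linear_functional_strong_weak_star_repr[OF l(1) F(1), of "1 / \<delta>", THEN exE])
    show "l ((y, 0), 0) \<le> 1 / \<delta> * norm y" for y
      using l(2)[of "((y, 0), 0)"] unfolding q_def sws_gauge_def by simp
    show "l ((0, ys), 0) \<le> 0" if "\<forall>u\<in>F. blinfun_apply ys u = 0" for ys
      using l(2)[of "((0, ys), 0)"] that unfolding q_def sws_gauge_def by simp
  qed blast
  show ?thesis
  proof (intro exI[of _ u] exI[of _ v] exI[of _ A] allI impI)
    fix y ys s assume "h (y, ys) \<le> ereal s"
    then have "1 \<le> l (p - ((y, ys), s))" using l(3) unfolding E_def by simp
    then show "1 \<le> blinfun_apply u (x0 - y) + blinfun_apply (xs0 - ys) v + A * (t - s)"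
      unfolding p_def using repr by (simp add: mult.commute)
  qed
qed

lemma nonpos_if_affine_bounded_below:
  fixes A K r t :: real
  assumes "\<And>s. r \<le> s \<Longrightarrow> 1 \<le> K + A * (t - s)"
  shows "A \<le> 0"
proof (rule ccontr)
  assume "\<not> A \<le> 0"
  define s where "s = max r (t + (\<bar>K\<bar> + 1) / A)"
  have "t + (\<bar>K\<bar> + 1) / A \<le> s" unfolding s_def by simp
  then have "A * (t - s) \<le> - (\<bar>K\<bar> + 1)" using \<open>\<not> A \<le> 0\<close> by (simp add: field_simps)
  moreover have "1 \<le> K + A * (t - s)" using assms[of s] unfolding s_def by simp
  ultimately show False by linarith
qed

text \<open>The functional separating \<open>((x, zs), r - 1)\<close> is strictly non-vertical because \<open>h (x, zs) = r\<close>;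
  adding a small multiple of it tilts the functional separating \<open>((x, xs), t)\<close>.\<close>

lemma strong_weak_star_nonvertical_separation:
  fixes h :: "'a::real_normed_vector \<times> ('a \<Rightarrow>\<^sub>L real) \<Rightarrow> ereal"
  assumes lsc: "lsc_wrt strong_weak_star h" and cv: "ereal_convex h"
    and fin: "h (x, zs) = ereal r" and t: "ereal t < h (x, xs)"
  shows "\<exists>(U::'a \<Rightarrow>\<^sub>L real) (w::'a). \<forall>y ys s. h (y, ys) \<le> ereal s \<longrightarrow>
           0 < blinfun_apply U (x - y) + blinfun_apply (xs - ys) w - t + s"
proof -
  have dom: "h (x, zs) < \<infinity>" using fin by simp
  obtain u v A where sep: "\<And>y ys s. h (y, ys) \<le> ereal s \<Longrightarrow>
      1 \<le> blinfun_apply u (x - y) + blinfun_apply (xs - ys) v + A * (t - s)"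
    using strong_weak_star_epigraph_separation[OF lsc cv dom t] by blast
  have "ereal (r - 1) < h (x, zs)" using fin by simp
  then obtain u' v' A' where sep': "\<And>y ys s. h (y, ys) \<le> ereal s \<Longrightarrow>
      1 \<le> blinfun_apply u' (x - y) + blinfun_apply (zs - ys) v' + A' * ((r - 1) - s)"
    using strong_weak_star_epigraph_separation[OF lsc cv dom] by blast
  have A': "A' \<le> -1" using sep'[of x zs r] fin by (simp add: blinfun.bilinear_simps)
  have A: "A \<le> 0"
    by (rule nonpos_if_affine_bounded_below[of r "blinfun_apply (xs - zs) v"])
       (use sep[of x zs] fin in \<open>simp add: blinfun.bilinear_simps\<close>)
  define K where "K = blinfun_apply (xs - zs) v' + A' * (t - r + 1)"
  define \<mu> where "\<mu> = 1 / (2 * (\<bar>1 + K\<bar> + 1))"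
  have \<mu>: "\<mu> > 0" "- (1 / 2) \<le> \<mu> * (1 + K)"
    unfolding \<mu>_def by (auto simp: field_simps abs_if split: if_splits)
  define \<kappa> where "\<kappa> = - (A + \<mu> * A')"
  have \<kappa>: "\<kappa> > 0" unfolding \<kappa>_def using A A' \<mu>(1) mult_left_mono[OF A', of \<mu>] by simp
  define U where "U = u + \<mu> *\<^sub>R u'"
  define w where "w = v + \<mu> *\<^sub>R v'"
  show ?thesis
  proof (intro exI[of _ "(1 / \<kappa>) *\<^sub>R U"] exI[of _ "(1 / \<kappa>) *\<^sub>R w"] allI impI)
    fix y ys s assume hs: "h (y, ys) \<le> ereal s"
    define P where "P = blinfun_apply u (x - y) + blinfun_apply (xs - ys) v + A * (t - s)"
    define P' where "P' = blinfun_apply u' (x - y) + blinfun_apply (xs - ys) v' + A' * (t - s)"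
    define X where "X = blinfun_apply U (x - y) + blinfun_apply (xs - ys) w"
    have "1 \<le> P" using sep[OF hs] unfolding P_def .
    moreover have "1 + K \<le> P'"
      using sep'[OF hs] unfolding K_def P'_def by (simp add: blinfun.bilinear_simps algebra_simps)
    then have "\<mu> * (1 + K) \<le> \<mu> * P'" using \<mu>(1) by simp
    ultimately have "0 < P + \<mu> * P'" using \<mu>(2) by linarith
    also have "P + \<mu> * P' = X - \<kappa> * (t - s)"
      unfolding P_def P'_def X_def U_def w_def \<kappa>_def by (simp add: blinfun.bilinear_simps algebra_simps)
    finally have "0 < (X - \<kappa> * (t - s)) / \<kappa>" using \<kappa> by simp
    also have "(X - \<kappa> * (t - s)) / \<kappa> = X / \<kappa> - t + s" using \<kappa> by (simp add: field_simps)
    finally show "0 < blinfun_apply ((1 / \<kappa>) *\<^sub>R U) (x - y) + blinfun_apply (xs - ys) ((1 / \<kappa>) *\<^sub>R w) - t + s"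
      unfolding X_def by (simp add: blinfun.bilinear_simps add_divide_distrib diff_divide_distrib)
  qed
qed

section \<open>Bounded domains\<close>

lemma bounded_dom_op_iff:
  "bounded (dom_op T) \<longleftrightarrow> (\<exists>R\<ge>0. \<forall>y ys. (y, ys) \<in> T \<longrightarrow> norm y \<le> R)"
proof
  assume "bounded (dom_op T)"
  then obtain a where "\<forall>x\<in>dom_op T. norm x \<le> a" unfolding bounded_iff by blast
  then show "\<exists>R\<ge>0. \<forall>y ys. (y, ys) \<in> T \<longrightarrow> norm y \<le> R"
    unfolding dom_op_def by (intro exI[of _ "max a 0"]) force
next
  assume "\<exists>R\<ge>0. \<forall>y ys. (y, ys) \<in> T \<longrightarrow> norm y \<le> R"
  then show "bounded (dom_op T)" unfolding bounded_iff dom_op_def by force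
qed

lemma dom_op_subset_fitz_dom:
  assumes "h \<in> fitz_family T"
  shows "dom_op T \<subseteq> fst ` dom_fun h"
proof
  fix y assume "y \<in> dom_op T"
  then obtain ys where "(y, ys) \<in> T" unfolding dom_op_def by force
  then have "(y, ys) \<in> dom_fun h" using assms unfolding fitz_family_def dom_fun_def by auto
  then show "y \<in> fst ` dom_fun h" by force
qed

lemma fitz_family_real_on_dom:
  assumes "h \<in> fitz_family T" and "h (x, xs) < \<infinity>"
  obtains r where "h (x, xs) = ereal r"
proof -
  have "ereal (pairing x xs) \<le> h (x, xs)" using assms(1) unfolding fitz_family_def by auto
  then show ?thesis using assms(2) that by (cases "h (x, xs)") auto
qed

lemma fitz_family_dom_norm_le:
  fixes h :: "'a::real_normed_vector \<times> ('a \<Rightarrow>\<^sub>L real) \<Rightarrow> ereal"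
  assumes mm: "maximal_monotone T" and h: "h \<in> fitz_family T"
    and R: "\<And>y ys. (y, ys) \<in> T \<Longrightarrow> norm y \<le> R" and dom: "h (x, zs) < \<infinity>"
  shows "norm x \<le> R"
proof -
  obtain r where r: "h (x, zs) = ereal r" using fitz_family_real_on_dom[OF h dom] .
  show ?thesis
  proof (rule maximal_monotone_norm_le_bound[OF mm R])
    fix y ys assume "(y, ys) \<in> T"
    from fitz_family_ge_fitzpatrick[OF h this, of zs x] r
    show "blinfun_apply zs x - r \<le> pairing (x - y) (zs - ys)" unfolding pairing_diff_diff by simp
  qed
qed

lemma fitz_family_slice_le:
  fixes h :: "'a::real_normed_vector \<times> ('a \<Rightarrow>\<^sub>L real) \<Rightarrow> ereal"
  assumes mm: "maximal_monotone T" and h: "h \<in> fitz_family T" and lsc: "lsc_wrt strong_weak_star h"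
    and R: "\<And>y ys. (y, ys) \<in> T \<Longrightarrow> norm y \<le> R" and fin: "h (x, zs) = ereal r"
  shows "h (x, xs) \<le> ereal (r + R * norm (xs - zs))"
proof (rule ccontr)
  assume "\<not> h (x, xs) \<le> ereal (r + R * norm (xs - zs))"
  then obtain t where t: "r + R * norm (xs - zs) < t" "ereal t < h (x, xs)"
    using ereal_dense2[of "ereal (r + R * norm (xs - zs))"] by (auto simp: not_le)
  have cv: "ereal_convex h" and onT: "\<And>y ys. (y, ys) \<in> T \<Longrightarrow> h (y, ys) = ereal (pairing y ys)"
    using h unfolding fitz_family_def by auto
  obtain U w where sep: "\<And>y ys s. h (y, ys) \<le> ereal s \<Longrightarrow>
      0 < blinfun_apply U (x - y) + blinfun_apply (xs - ys) w - t + s"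
    using strong_weak_star_nonvertical_separation[OF lsc cv fin t(2)] by blast
  have "norm w \<le> R"
  proof (rule maximal_monotone_norm_le_bound[OF mm R])
    fix y ys assume "(y, ys) \<in> T"
    from sep[of y ys "blinfun_apply ys y"] onT[OF this]
    show "blinfun_apply U w - blinfun_apply U x - blinfun_apply xs w + t \<le> pairing (w - y) (U - ys)"
      unfolding pairing_diff_diff by (simp add: pairing_def blinfun.bilinear_simps)
  qed
  then have "blinfun_apply (xs - zs) w \<le> R * norm (xs - zs)"
    using norm_blinfun[of "xs - zs" w] mult_left_mono[of "norm w" R "norm (xs - zs)"]
    by (simp add: mult.commute)
  moreover have "0 < blinfun_apply (xs - zs) w - t + r"
    using sep[of x zs r] fin by (simp add: blinfun.bilinear_simps)
  ultimately show False using t(1) by linarith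
qed

definition slices_finite :: "('a \<times> 'b \<Rightarrow> ereal) \<Rightarrow> bool" where
  "slices_finite h \<longleftrightarrow> (\<forall>x\<in>fst ` dom_fun h. \<forall>xs. \<bar>h (x, xs)\<bar> \<noteq> \<infinity>)"

definition slices_lipschitz :: "('a \<times> 'b::real_normed_vector \<Rightarrow> ereal) \<Rightarrow> real \<Rightarrow> bool" where
  "slices_lipschitz h L \<longleftrightarrow> (\<forall>x\<in>fst ` dom_fun h. \<forall>xs zs.
     \<bar>real_of_ereal (h (x, xs)) - real_of_ereal (h (x, zs))\<bar> \<le> L * norm (xs - zs))"

lemma fitz_family_slices_lipschitz:
  fixes h :: "'a::real_normed_vector \<times> ('a \<Rightarrow>\<^sub>L real) \<Rightarrow> ereal"
  assumes mm: "maximal_monotone T" and h: "h \<in> fitz_family T" and lsc: "lsc_wrt strong_weak_star h"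
    and R: "\<And>y ys. (y, ys) \<in> T \<Longrightarrow> norm y \<le> R"
  shows "slices_finite h \<and> slices_lipschitz h R"
proof -
  have slice_real: "\<exists>a. h (x, xs) = ereal a" if x: "x \<in> fst ` dom_fun h" for x xs
  proof -
    obtain z0 where "(x, z0) \<in> dom_fun h" using x by force
    then have "h (x, z0) < \<infinity>" unfolding dom_fun_def by simp
    then obtain r0 where "h (x, z0) = ereal r0" by (rule fitz_family_real_on_dom[OF h])
    from fitz_family_slice_le[OF mm h lsc R this]
    have "h (x, xs) \<le> ereal (r0 + R * norm (xs - z0))" .
    then have "h (x, xs) < \<infinity>" by (rule le_less_trans) simp
    then show ?thesis by (rule fitz_family_real_on_dom[OF h]) blast
  qed
  have "\<bar>real_of_ereal (h (x, xs)) - real_of_ereal (h (x, zs))\<bar> \<le> R * norm (xs - zs)"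
    if x: "x \<in> fst ` dom_fun h" for x xs zs
  proof -
    obtain a b where a: "h (x, xs) = ereal a" and b: "h (x, zs) = ereal b" using slice_real[OF x] by blast
    have "h (x, xs) \<le> ereal (b + R * norm (xs - zs))" by (rule fitz_family_slice_le[OF mm h lsc R b])
    moreover have "h (x, zs) \<le> ereal (a + R * norm (zs - xs))" by (rule fitz_family_slice_le[OF mm h lsc R a])
    ultimately have "a \<le> b + R * norm (xs - zs)" "b \<le> a + R * norm (zs - xs)" using a b by simp_all
    then show ?thesis using a b by (simp add: abs_le_iff norm_minus_commute)
  qed
  moreover have "\<bar>h (x, xs)\<bar> \<noteq> \<infinity>" if "x \<in> fst ` dom_fun h" for x xs
    using slice_real[OF that, of xs] by auto
  ultimately show ?thesis unfolding slices_finite_def slices_lipschitz_def by (intro conjI ballI allI)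
qed

lemma slices_lipschitz_dom_norm_le:
  fixes h :: "'a::real_normed_vector \<times> ('a \<Rightarrow>\<^sub>L real) \<Rightarrow> ereal"
  assumes h: "h \<in> fitz_family T" and yT: "(y, ys) \<in> T" and "0 \<le> L"
    and fin: "slices_finite h" and lip: "slices_lipschitz h L"
  shows "norm y \<le> L"
proof -
  have y: "y \<in> fst ` dom_fun h" using dom_op_subset_fitz_dom[OF h] yT unfolding dom_op_def by force
  obtain g :: "'a \<Rightarrow>\<^sub>L real" where g: "norm g \<le> 1" "blinfun_apply g y = norm y"
    using exists_norming_functional by blast
  have hT: "h (y, ys) = ereal (blinfun_apply ys y)" using h yT unfolding fitz_family_def pairing_def by auto
  have "\<bar>h (y, ys + g)\<bar> \<noteq> \<infinity>"
    using spec[OF bspec[OF fin[unfolded slices_finite_def] y], of "ys + g"] .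
  then obtain a where a: "h (y, ys + g) = ereal a" by (cases "h (y, ys + g)") auto
  have "ereal (pairing y (ys + g)) \<le> h (y, ys + g)" using h unfolding fitz_family_def by auto
  then have "blinfun_apply ys y + norm y \<le> a" using a g(2) by (simp add: pairing_def blinfun.bilinear_simps)
  moreover have "\<bar>a - blinfun_apply ys y\<bar> \<le> L * norm g"
    using bspec[OF lip[unfolded slices_lipschitz_def] y, rule_format, of "ys + g" ys] a hT by simp
  then have "a - blinfun_apply ys y \<le> L" using mult_left_mono[OF g(1) \<open>0 \<le> L\<close>] by linarith
  ultimately show ?thesis by linarith
qed

lemma bounded_dom_op_iff_all_fitz_dom_bounded:
  assumes mm: "maximal_monotone T"
  shows "bounded (dom_op T) \<longleftrightarrow> (\<forall>h\<in>fitz_family T. bounded (fst ` dom_fun h))"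
proof (intro iffI ballI)
  fix h assume "bounded (dom_op T)" and h: "h \<in> fitz_family T"
  then obtain R where R: "\<And>y ys. (y, ys) \<in> T \<Longrightarrow> norm y \<le> R" unfolding bounded_dom_op_iff by blast
  have "norm x \<le> R" if x: "x \<in> fst ` dom_fun h" for x
  proof -
    obtain zs where "(x, zs) \<in> dom_fun h" using x by force
    then show ?thesis unfolding dom_fun_def using fitz_family_dom_norm_le[OF mm h R] by simp
  qed
  then show "bounded (fst ` dom_fun h)" unfolding bounded_iff by blast
next
  assume "\<forall>h\<in>fitz_family T. bounded (fst ` dom_fun h)"
  moreover have fitz: "fitzpatrick T \<in> fitz_family T" by (rule fitzpatrick_in_fitz_family[OF mm])
  ultimately show "bounded (dom_op T)" using bounded_subset[OF _ dom_op_subset_fitz_dom[OF fitz]] by blast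
qed

lemma bounded_dom_op_iff_ex_fitz_dom_bounded:
  assumes mm: "maximal_monotone T"
  shows "bounded (dom_op T) \<longleftrightarrow> (\<exists>h\<in>fitz_family T. bounded (fst ` dom_fun h))"
proof
  assume "bounded (dom_op T)"
  then show "\<exists>h\<in>fitz_family T. bounded (fst ` dom_fun h)"
    using bounded_dom_op_iff_all_fitz_dom_bounded[OF mm] fitzpatrick_in_fitz_family[OF mm] by blast
next
  assume "\<exists>h\<in>fitz_family T. bounded (fst ` dom_fun h)"
  then obtain h where h: "h \<in> fitz_family T" and "bounded (fst ` dom_fun h)" by blast
  then show "bounded (dom_op T)" using bounded_subset[OF _ dom_op_subset_fitz_dom[OF h]] by blast
qed

lemma bounded_dom_op_iff_all_slices_lipschitz:
  assumes mm: "maximal_monotone T"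
  shows "bounded (dom_op T) \<longleftrightarrow>
    (\<forall>h\<in>fitz_family T. lsc_wrt strong_weak_star h \<longrightarrow> slices_finite h) \<and>
    (\<exists>L. 0 \<le> L \<and> (\<forall>h\<in>fitz_family T. lsc_wrt strong_weak_star h \<longrightarrow> slices_lipschitz h L))"
proof
  assume "bounded (dom_op T)"
  then obtain R where "0 \<le> R" and R: "\<And>y ys. (y, ys) \<in> T \<Longrightarrow> norm y \<le> R"
    using bounded_dom_op_iff by blast
  then show "(\<forall>h\<in>fitz_family T. lsc_wrt strong_weak_star h \<longrightarrow> slices_finite h) \<and>
    (\<exists>L. 0 \<le> L \<and> (\<forall>h\<in>fitz_family T. lsc_wrt strong_weak_star h \<longrightarrow> slices_lipschitz h L))"
  proof -
    have "slices_finite h \<and> slices_lipschitz h R"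
      if "h \<in> fitz_family T" "lsc_wrt strong_weak_star h" for h
      by (rule fitz_family_slices_lipschitz[OF mm that R])
    then show ?thesis using \<open>0 \<le> R\<close> by blast
  qed
next
  assume "(\<forall>h\<in>fitz_family T. lsc_wrt strong_weak_star h \<longrightarrow> slices_finite h) \<and>
    (\<exists>L. 0 \<le> L \<and> (\<forall>h\<in>fitz_family T. lsc_wrt strong_weak_star h \<longrightarrow> slices_lipschitz h L))"
  moreover have "fitzpatrick T \<in> fitz_family T" "lsc_wrt strong_weak_star (fitzpatrick T)"
    using fitzpatrick_in_fitz_family[OF mm] lsc_strong_weak_star_fitzpatrick by blast+
  ultimately obtain L where "0 \<le> L" "slices_finite (fitzpatrick T)" "slices_lipschitz (fitzpatrick T) L"
    by blast
  then show "bounded (dom_op T)"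
    unfolding bounded_dom_op_iff using slices_lipschitz_dom_norm_le[OF \<open>fitzpatrick T \<in> fitz_family T\<close>] by blast
qed

lemma bounded_dom_op_iff_ex_slices_lipschitz:
  assumes mm: "maximal_monotone T"
  shows "bounded (dom_op T) \<longleftrightarrow> (\<exists>h\<in>fitz_family T. lsc_wrt strong_weak_star h \<and>
    slices_finite h \<and> (\<exists>L. 0 \<le> L \<and> slices_lipschitz h L))"
proof
  assume "bounded (dom_op T)"
  moreover have "fitzpatrick T \<in> fitz_family T" "lsc_wrt strong_weak_star (fitzpatrick T)"
    using fitzpatrick_in_fitz_family[OF mm] lsc_strong_weak_star_fitzpatrick by blast+
  ultimately show "\<exists>h\<in>fitz_family T. lsc_wrt strong_weak_star h \<and>
    slices_finite h \<and> (\<exists>L. 0 \<le> L \<and> slices_lipschitz h L)"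
    using bounded_dom_op_iff_all_slices_lipschitz[OF mm] by blast
next
  assume "\<exists>h\<in>fitz_family T. lsc_wrt strong_weak_star h \<and> slices_finite h \<and> (\<exists>L. 0 \<le> L \<and> slices_lipschitz h L)"
  then obtain h L where "h \<in> fitz_family T" "0 \<le> L" "slices_finite h" "slices_lipschitz h L" by blast
  then show "bounded (dom_op T)" unfolding bounded_dom_op_iff using slices_lipschitz_dom_norm_le by blast
qed

theorem lemma4p5:
  fixes T :: "('a::banach \<times> ('a \<Rightarrow>\<^sub>L real)) set"
  assumes "maximal_monotone T"
  shows "(bounded (dom_op T) \<longleftrightarrow>
            (\<forall>h\<in>fitz_family T. bounded (fst ` dom_fun h)))
       \<and> (bounded (dom_op T) \<longleftrightarrow>
            (\<exists>h\<in>fitz_family T. bounded (fst ` dom_fun h)))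
       \<and> (bounded (dom_op T) \<longleftrightarrow>
            ((\<forall>h\<in>fitz_family T. lsc_wrt strong_weak_star h \<longrightarrow>
                (\<forall>x\<in>fst ` dom_fun h. \<forall>xs. \<bar>h (x, xs)\<bar> \<noteq> \<infinity>))
             \<and> (\<exists>L::real. 0 \<le> L \<and>
                (\<forall>h\<in>fitz_family T. lsc_wrt strong_weak_star h \<longrightarrow>
                  (\<forall>x\<in>fst ` dom_fun h. \<forall>xs zs.
                     \<bar>real_of_ereal (h (x, xs)) - real_of_ereal (h (x, zs))\<bar>
                       \<le> L * norm (xs - zs))))))
       \<and> (bounded (dom_op T) \<longleftrightarrow>
            (\<exists>h\<in>fitz_family T. lsc_wrt strong_weak_star h \<and>
                (\<forall>x\<in>fst ` dom_fun h. \<forall>xs. \<bar>h (x, xs)\<bar> \<noteq> \<infinity>)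
              \<and> (\<exists>L::real. 0 \<le> L \<and>
                  (\<forall>x\<in>fst ` dom_fun h. \<forall>xs zs.
                     \<bar>real_of_ereal (h (x, xs)) - real_of_ereal (h (x, zs))\<bar>
                       \<le> L * norm (xs - zs)))))"
  by (intro conjI bounded_dom_op_iff_all_fitz_dom_bounded[OF assms] bounded_dom_op_iff_ex_fitz_dom_bounded[OF assms]
      bounded_dom_op_iff_all_slices_lipschitz[OF assms, unfolded slices_finite_def slices_lipschitz_def]
      bounded_dom_op_iff_ex_slices_lipschitz[OF assms, unfolded slices_finite_def slices_lipschitz_def])

end
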